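(* Let $X$ be one of the types below, of rank $l$, with finite Weyl group $W$ having Coxeter number $h$ and exponents $m_1,\dots,m_l$ (so that $\exp(2\pi i m_j/h)$, $j=1,\dots,l$, are the eigenvalues of a Coxeter transformation of $W$). Setting $\zeta=e^{2\pi i/h}$, $$\prod_{j=1}^l\bigl(t^2-\zeta^{m_j}\bigr)=\frac{(1-t^{2h})(1-t^{2p})(1-t^{2q})(1-t^{2r})}{(1-t^2)(1-t^a)(1-t^b)(1-t^h)},$$ where $(a,b,h,p,q,r)$ is given by: $\mathsf A_l$ ($l\ge0$): $(2,\,l+1,\,l+1,\,\tfrac12(l+1),\,\tfrac12(l+1),\,1)$; $\mathsf D_l$ ($l\ge4$): $(4,\,2l-4,\,2l-2,\,l-2,\,2,\,2)$; $\mathsf E_6$: $(6,8,12,3,3,2)$; $\mathsf E_7$: $(8,12,18,4,3,2)$; $\mathsf E_8$: $(12,20,30,5,3,2)$; $\mathsf C_l$ ($l\ge2$): $(2,\,2l,\,2l,\,l,\,1,\,1)$; $\mathsf B_l$ ($l\ge3$): $(4,\,2l-2,\,2l,\,l-1,\,2,\,1)$; $\mathsf F_4$: $(6,8,12,3,2,1)$; $\mathsf G_2$: $(4,4,6,2,1,1)$. *)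

theory Defs
  imports Complex_Main "Jordan_Normal_Form.Char_Poly"
begin

text \<open>Irreducible (reduced) root system types, Bourbaki numbering of simple roots,
  0-indexed here (node i corresponds to Bourbaki's alpha_(i+1)).\<close>

datatype root_type = TA nat | TB nat | TC nat | TD nat | TE6 | TE7 | TE8 | TF4 | TG2

fun admissible_type :: "root_type \<Rightarrow> bool" where
  "admissible_type (TA l) = True"
| "admissible_type (TB l) = (l \<ge> 3)"
| "admissible_type (TC l) = (l \<ge> 2)"
| "admissible_type (TD l) = (l \<ge> 4)"
| "admissible_type _ = True"

fun type_rank :: "root_type \<Rightarrow> nat" where
  "type_rank (TA l) = l"
| "type_rank (TB l) = l"
| "type_rank (TC l) = l"
| "type_rank (TD l) = l"
| "type_rank TE6 = 6"
| "type_rank TE7 = 7"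
| "type_rank TE8 = 8"
| "type_rank TF4 = 4"
| "type_rank TG2 = 2"

text \<open>Edges of the E_8 Dynkin diagram (Bourbaki: 1-3-4-5-6-7-8 and 2-4), 0-indexed;
  E_6 and E_7 are the restrictions to the first 6 resp. 7 nodes.\<close>
definition E_edge :: "nat \<Rightarrow> nat \<Rightarrow> bool" where
  "E_edge i j = ({i, j} \<in> {{0,2},{2,3},{3,4},{4,5},{5,6},{6,7},{1,3}})"

text \<open>Cartan matrix entries a_ij = <alpha_i^vee, alpha_j> = 2(alpha_i,alpha_j)/(alpha_i,alpha_i).\<close>
fun cartan_entry :: "root_type \<Rightarrow> nat \<Rightarrow> nat \<Rightarrow> int" where
  "cartan_entry (TA l) i j =
     (if i = j then 2 else if i + 1 = j \<or> j + 1 = i then -1 else 0)"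
| "cartan_entry (TB l) i j =
     (if i = j then 2
      else if i = l - 1 \<and> j = l - 2 then -2
      else if i + 1 = j \<or> j + 1 = i then -1 else 0)"
| "cartan_entry (TC l) i j =
     (if i = j then 2
      else if i = l - 2 \<and> j = l - 1 then -2
      else if i + 1 = j \<or> j + 1 = i then -1 else 0)"
| "cartan_entry (TD l) i j =
     (if i = j then 2
      else if (i \<le> l - 2 \<and> j \<le> l - 2 \<and> (i + 1 = j \<or> j + 1 = i))
              \<or> {i, j} = {l - 3, l - 1} then -1 else 0)"
| "cartan_entry TE6 i j = (if i = j then 2 else if E_edge i j then -1 else 0)"
| "cartan_entry TE7 i j = (if i = j then 2 else if E_edge i j then -1 else 0)"
| "cartan_entry TE8 i j = (if i = j then 2 else if E_edge i j then -1 else 0)"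
| "cartan_entry TF4 i j =
     (if i = j then 2
      else if i = 2 \<and> j = 1 then -2
      else if i + 1 = j \<or> j + 1 = i then -1 else 0)"
| "cartan_entry TG2 i j =
     (if i = j then 2 else if i = 1 \<and> j = 0 then -3 else -1)"

definition cartan_matrix :: "root_type \<Rightarrow> int mat" where
  "cartan_matrix X = mat (type_rank X) (type_rank X) (\<lambda>(i, j). cartan_entry X i j)"

text \<open>Matrix (w.r.t. the basis of simple roots) of the simple reflection
  s_i(alpha_j) = alpha_j - a_ij alpha_i.\<close>
definition simple_reflection :: "root_type \<Rightarrow> nat \<Rightarrow> int mat" where
  "simple_reflection X i = mat (type_rank X) (type_rank X)
     (\<lambda>(k, j). (if k = j then 1 else 0) - (if k = i then cartan_entry X i j else 0))"

definition coxeter_transformation :: "root_type \<Rightarrow> int mat" where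
  "coxeter_transformation X =
     foldr (\<lambda>i M. simple_reflection X i * M) [0..<type_rank X] (1\<^sub>m (type_rank X))"

definition is_exponent_list :: "root_type \<Rightarrow> nat \<Rightarrow> nat list \<Rightarrow> bool" where
  "is_exponent_list X h ms \<longleftrightarrow>
     length ms = type_rank X \<and> (\<forall>m \<in> set ms. 1 \<le> m \<and> m < h) \<and>
     char_poly (map_mat of_int (coxeter_transformation X) :: complex mat) =
       (\<Prod>m\<leftarrow>ms. [: - cis (2 * pi * real m / real h), 1 :])"

text \<open>The table data (a, b, h, 2p, 2q, 2r). We store 2p, 2q, 2r (always natural numbers)
  since p = (l+1)/2 for type A_l may be a half-integer; only t^(2p) etc. occur.\<close>
fun table_data :: "root_type \<Rightarrow> nat \<times> nat \<times> nat \<times> nat \<times> nat \<times> nat" where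
  "table_data (TA l) = (2, l + 1, l + 1, l + 1, l + 1, 2)"
| "table_data (TD l) = (4, 2*l - 4, 2*l - 2, 2*(l - 2), 4, 4)"
| "table_data TE6 = (6, 8, 12, 6, 6, 4)"
| "table_data TE7 = (8, 12, 18, 8, 6, 4)"
| "table_data TE8 = (12, 20, 30, 10, 6, 4)"
| "table_data (TC l) = (2, 2*l, 2*l, 2*l, 2, 2)"
| "table_data (TB l) = (4, 2*l - 2, 2*l, 2*(l - 1), 4, 2)"
| "table_data TF4 = (6, 8, 12, 6, 4, 2)"
| "table_data TG2 = (4, 4, 6, 4, 2, 2)"

end

theory Submission
  imports Defs
begin

(* Let A = (a_ij) be the Cartan matrix, U the unitriangular matrix with entries a_ij above the
   diagonal and L the strictly lower part of A. Multiplying the simple reflections one at a time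
   shows U c = -(1 + L) for the Coxeter transformation c = s_1 ... s_l, so
   det (x - c) = det (x U + 1 + L): a matrix with x + 1 on the diagonal, x a_ij above it and a_ij
   below it. Since the Dynkin diagram is a tree, removing a leaf j attached to k gives the
   recurrence D = (x + 1) D' - a_jk a_kj x D'', where D' and D'' belong to the diagram without j,
   resp. without j and k. This yields closed forms for all types (e.g. 1 + x^l for B_l and C_l),
   and with x = t^2 the table identity becomes a polynomial identity in t. *)

definition det_fun :: "nat \<Rightarrow> (nat \<Rightarrow> nat \<Rightarrow> 'a::comm_ring_1) \<Rightarrow> 'a" where
  "det_fun n f = det (mat n n (\<lambda>(i, j). f i j))"

lemma det_fun_cong:
  "(\<And>i j. i < n \<Longrightarrow> j < n \<Longrightarrow> f i j = g i j) \<Longrightarrow> det_fun n f = det_fun n g"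
  unfolding det_fun_def by (intro arg_cong[where f = det] eq_matI) auto

lemma det_fun_0 [simp]: "det_fun 0 f = 1"
  unfolding det_fun_def by (simp add: det_def)

lemma cofactor_mat:
  "cofactor (mat (Suc n) (Suc n) (\<lambda>(i, j). f i j)) k l =
     (-1) ^ (k + l) * det_fun n (\<lambda>i j. f (insert_index k i) (insert_index l j))"
  unfolding cofactor_def det_fun_def mat_delete_def insert_index_def
  by (intro arg_cong[where f = "\<lambda>M. (-1) ^ (k + l) * det M"] eq_matI) auto

lemma det_fun_laplace_last_col:
  "det_fun (Suc n) f =
     (\<Sum>i<Suc n. f i n * ((-1) ^ (i + n) * det_fun n (\<lambda>a b. f (insert_index i a) b)))"
proof -
  have "det_fun n (\<lambda>a b. f (insert_index i a) (insert_index n b)) =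
      det_fun n (\<lambda>a b. f (insert_index i a) b)" for i
    by (rule det_fun_cong) simp
  then show ?thesis
    unfolding det_fun_def
    by (subst laplace_expansion_column[of _ "Suc n" n])
      (auto simp: cofactor_mat[unfolded det_fun_def] lessThan_atLeast0)
qed

lemma det_fun_laplace_last_row:
  "det_fun (Suc n) f =
     (\<Sum>j<Suc n. f n j * ((-1) ^ (n + j) * det_fun n (\<lambda>a b. f a (insert_index j b))))"
proof -
  have "det_fun n (\<lambda>a b. f (insert_index n a) (insert_index j b)) =
      det_fun n (\<lambda>a b. f a (insert_index j b))" for j
    by (rule det_fun_cong) simp
  then show ?thesis
    unfolding det_fun_def
    by (subst laplace_expansion_row[of _ "Suc n" n])
      (auto simp: cofactor_mat[unfolded det_fun_def] lessThan_atLeast0)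
qed

lemma det_fun_Suc_last_col_zero:
  assumes "\<And>i. i < n \<Longrightarrow> f i n = 0"
  shows "det_fun (Suc n) f = f n n * det_fun n f"
proof -
  have "det_fun (Suc n) f = f n n * det_fun n (\<lambda>a b. f (insert_index n a) b)"
    by (subst det_fun_laplace_last_col, subst sum.remove[of _ n]) (auto simp: assms)
  also have "det_fun n (\<lambda>a b. f (insert_index n a) b) = det_fun n f"
    by (rule det_fun_cong) simp
  finally show ?thesis .
qed

lemma det_fun_1: "det_fun (Suc 0) f = f 0 0" "det_fun 1 f = f 0 0"
  using det_fun_Suc_last_col_zero[of 0 f] by simp_all

lemma det_fun_pendant:
  assumes k: "k \<le> n"
    and pendant: "\<And>j. j \<le> n \<Longrightarrow> j \<noteq> k \<Longrightarrow> f j (Suc n) = 0 \<and> f (Suc n) j = 0"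
  shows "det_fun (Suc (Suc n)) f = f (Suc n) (Suc n) * det_fun (Suc n) f
      - f k (Suc n) * f (Suc n) k * det_fun n (\<lambda>i j. f (insert_index k i) (insert_index k j))"
proof -
  let ?minor = "det_fun (Suc n) (\<lambda>a b. f (insert_index k a) b)"
  have col: "det_fun (Suc (Suc n)) f =
      f (Suc n) (Suc n) * det_fun (Suc n) (\<lambda>a b. f (insert_index (Suc n) a) b)
      - (-1) ^ (k + n) * f k (Suc n) * ?minor"
    using k
    by (subst det_fun_laplace_last_col, subst sum.remove[of _ "Suc n"], simp, simp,
        subst sum.remove[of _ k]) (auto simp: pendant intro!: sum.neutral)
  have "det_fun (Suc n) (\<lambda>a b. f (insert_index (Suc n) a) b) = det_fun (Suc n) f"
    by (rule det_fun_cong) simp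
  moreover have "?minor = (-1) ^ (n + k) * f (Suc n) k *
      det_fun n (\<lambda>i j. f (insert_index k i) (insert_index k j))"
    using k
    by (subst det_fun_laplace_last_row, subst sum.remove[of _ k])
      (auto simp: pendant intro!: sum.neutral)
  ultimately show ?thesis
    unfolding col by (simp add: algebra_simps flip: power_add)
qed

lemma det_fun_path_end:
  assumes "\<And>j. j < n \<Longrightarrow> f j (Suc n) = 0 \<and> f (Suc n) j = 0"
  shows "det_fun (Suc (Suc n)) f =
    f (Suc n) (Suc n) * det_fun (Suc n) f - f n (Suc n) * f (Suc n) n * det_fun n f"
proof -
  have "det_fun n (\<lambda>i j. f (insert_index n i) (insert_index n j)) = det_fun n f"
    by (rule det_fun_cong) simp
  with det_fun_pendant[of n n f] assms show ?thesis by auto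
qed

definition reflection_mat :: "(nat \<Rightarrow> nat \<Rightarrow> 'a::comm_ring_1) \<Rightarrow> nat \<Rightarrow> nat \<Rightarrow> 'a mat" where
  "reflection_mat a n k =
     mat n n (\<lambda>(i, j). (if i = j then 1 else 0) - (if i = k then a k j else 0))"

definition reflection_product :: "(nat \<Rightarrow> nat \<Rightarrow> 'a::comm_ring_1) \<Rightarrow> nat \<Rightarrow> nat list \<Rightarrow> 'a mat" where
  "reflection_product a n ks = foldr (\<lambda>k M. reflection_mat a n k * M) ks (1\<^sub>m n)"

(* For k = 0 these are U and -(1 + L); for larger k the rows above k are those of the identity,
   so that coxeter_upper a n k times the product of the reflections k, ..., n - 1 is
   coxeter_lower a n k. *)
definition coxeter_upper :: "(nat \<Rightarrow> nat \<Rightarrow> 'a::comm_ring_1) \<Rightarrow> nat \<Rightarrow> nat \<Rightarrow> 'a mat" where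
  "coxeter_upper a n k =
     mat n n (\<lambda>(i, j). if i = j then 1 else if k \<le> i \<and> i < j then a i j else 0)"

definition coxeter_lower :: "(nat \<Rightarrow> nat \<Rightarrow> 'a::comm_ring_1) \<Rightarrow> nat \<Rightarrow> nat \<Rightarrow> 'a mat" where
  "coxeter_lower a n k =
     mat n n (\<lambda>(i, j). if i < k then (if i = j then 1 else 0)
                      else if i = j then -1 else if j < i then - a i j else 0)"

definition coxeter_step :: "(nat \<Rightarrow> nat \<Rightarrow> 'a::comm_ring_1) \<Rightarrow> nat \<Rightarrow> nat \<Rightarrow> 'a mat" where
  "coxeter_step a n k =
     mat n n (\<lambda>(i, j). if i \<noteq> k then (if i = j then 1 else 0)
                      else if j = k then -1 else if j < k then - a k j else 0)"

lemma index_mult_mat_sum: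
  assumes "A \<in> carrier_mat m n" "B \<in> carrier_mat n p" "i < m" "j < p"
  shows "(A * B) $$ (i, j) = (\<Sum>c<n. A $$ (i, c) * B $$ (c, j))"
  using assms by (auto simp: scalar_prod_def lessThan_atLeast0 intro: sum.cong)

lemma index_mult_reflection_mat:
  assumes "M \<in> carrier_mat m n" "i < m" "j < n" "k < n"
  shows "(M * reflection_mat a n k) $$ (i, j) = M $$ (i, j) - M $$ (i, k) * a k j"
  using assms
  by (simp add: reflection_mat_def scalar_prod_def right_diff_distrib sum_subtractf
      if_distrib[of "\<lambda>x. _ * x"] sum.delta' cong: if_cong)

lemma coxeter_mats_carrier [simp]:
  "reflection_mat a n k \<in> carrier_mat n n" "coxeter_upper a n k \<in> carrier_mat n n"
  "coxeter_lower a n k \<in> carrier_mat n n" "coxeter_step a n k \<in> carrier_mat n n"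
  by (simp_all add: reflection_mat_def coxeter_upper_def coxeter_lower_def coxeter_step_def)

lemma reflection_product_simps [simp]:
  "reflection_product a n [] = 1\<^sub>m n"
  "reflection_product a n (k # ks) = reflection_mat a n k * reflection_product a n ks"
  by (simp_all add: reflection_product_def)

lemma reflection_product_carrier [simp]: "reflection_product a n ks \<in> carrier_mat n n"
  by (induction ks) (auto intro: mult_carrier_mat[OF coxeter_mats_carrier(1)])

lemma index_coxeter_step_mult:
  assumes M: "M \<in> carrier_mat n m" and "i < n" "j < m" "k < n"
  shows "(coxeter_step a n k * M) $$ (i, j) =
    (if i = k then - M $$ (k, j) - (\<Sum>c<k. a k c * M $$ (c, j)) else M $$ (i, j))"
proof -
  have "(coxeter_step a n k * M) $$ (i, j) = (\<Sum>c<n. coxeter_step a n k $$ (i, c) * M $$ (c, j))"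
    using assms by (intro index_mult_mat_sum[OF coxeter_mats_carrier(4) M])
  also have "\<dots> = (if i = k then (\<Sum>c<n. (if c = k then - M $$ (k, j) else 0)
      - (if c < k then a k c * M $$ (c, j) else 0)) else M $$ (i, j))"
    using assms by (auto simp: coxeter_step_def if_distrib[of "\<lambda>x. x * _"] sum.delta
        intro!: sum.cong cong: if_cong)
  moreover have "(\<Sum>c<n. if c < k then a k c * M $$ (c, j) else 0) = (\<Sum>c<k. a k c * M $$ (c, j))"
    using assms by (intro sum.mono_neutral_cong_right) auto
  ultimately show ?thesis using assms by (simp add: sum_subtractf)
qed

lemma coxeter_upper_mult_reflection:
  assumes "k < n" "a k k = 2"
  shows "coxeter_upper a n k * reflection_mat a n k =
    coxeter_step a n k * coxeter_upper a n (Suc k)"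
proof (rule eq_matI)
  fix i j assume "i < dim_row (coxeter_step a n k * coxeter_upper a n (Suc k))"
    "j < dim_col (coxeter_step a n k * coxeter_upper a n (Suc k))"
  then have ij: "i < n" "j < n" by (auto simp: coxeter_step_def coxeter_upper_def)
  have "(coxeter_upper a n k * reflection_mat a n k) $$ (i, j) =
      coxeter_upper a n k $$ (i, j) - coxeter_upper a n k $$ (i, k) * a k j"
    using ij assms(1) by (intro index_mult_reflection_mat) auto
  moreover have "(coxeter_step a n k * coxeter_upper a n (Suc k)) $$ (i, j) =
      (if i = k then - coxeter_upper a n (Suc k) $$ (k, j)
         - (\<Sum>c<k. a k c * coxeter_upper a n (Suc k) $$ (c, j))
       else coxeter_upper a n (Suc k) $$ (i, j))"
    using ij assms(1) by (intro index_coxeter_step_mult) auto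
  ultimately show "(coxeter_upper a n k * reflection_mat a n k) $$ (i, j) =
      (coxeter_step a n k * coxeter_upper a n (Suc k)) $$ (i, j)"
    using ij assms
    by (auto simp: coxeter_upper_def if_distrib[of "\<lambda>x. _ * x"] sum.delta cong: if_cong)
qed (auto simp: coxeter_step_def coxeter_upper_def reflection_mat_def)

lemma coxeter_step_mult_lower:
  assumes "k < n"
  shows "coxeter_step a n k * coxeter_lower a n (Suc k) = coxeter_lower a n k"
proof (rule eq_matI)
  fix i j assume "i < dim_row (coxeter_lower a n k)" "j < dim_col (coxeter_lower a n k)"
  then have "i < n" "j < n" by (auto simp: coxeter_lower_def)
  with assms show "(coxeter_step a n k * coxeter_lower a n (Suc k)) $$ (i, j) =
      coxeter_lower a n k $$ (i, j)"
    by (subst index_coxeter_step_mult[of _ n n])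
      (auto simp: coxeter_lower_def if_distrib[of "\<lambda>x. _ * x"] sum.delta cong: if_cong)
qed (auto simp: coxeter_step_def coxeter_lower_def)

lemma coxeter_upper_mult_reflections:
  assumes "k \<le> n" "\<And>i. i < n \<Longrightarrow> a i i = 2"
  shows "coxeter_upper a n k * reflection_product a n [k..<n] = coxeter_lower a n k"
  using assms(1)
proof (induction k rule: inc_induct)
  case base
  have "coxeter_upper a n n = 1\<^sub>m n" "coxeter_lower a n n = 1\<^sub>m n"
    by (auto simp: coxeter_upper_def coxeter_lower_def)
  then show ?case by simp
next
  case (step k)
  let ?P = "reflection_product a n [Suc k..<n]"
  have P: "?P \<in> carrier_mat n n" by simp
  have "coxeter_upper a n k * reflection_product a n [k..<n] =
      (coxeter_upper a n k * reflection_mat a n k) * ?P"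
    using step(2) by (simp add: upt_conv_Cons assoc_mult_mat[of "coxeter_upper a n k" n n _ n _ n])
  also have "\<dots> = (coxeter_step a n k * coxeter_upper a n (Suc k)) * ?P"
    using step(2) assms(2) by (simp add: coxeter_upper_mult_reflection)
  also have "\<dots> = coxeter_step a n k * (coxeter_upper a n (Suc k) * ?P)"
    using P by (rule assoc_mult_mat[OF coxeter_mats_carrier(4) coxeter_mats_carrier(2)])
  also have "\<dots> = coxeter_lower a n k"
    using step(2,3) by (simp add: coxeter_step_mult_lower)
  finally show ?case .
qed

definition coxeter_pencil :: "(nat \<Rightarrow> nat \<Rightarrow> 'a::comm_ring_1) \<Rightarrow> 'a \<Rightarrow> nat \<Rightarrow> nat \<Rightarrow> 'a" where
  "coxeter_pencil a x i j = (if i = j then x + 1 else if i < j then x * a i j else a i j)"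

lemma det_coxeter_upper: "det (coxeter_upper a n k) = 1"
proof -
  have "upper_triangular (coxeter_upper a n k)"
    by (auto simp: upper_triangular_def coxeter_upper_def)
  moreover have "diag_mat (coxeter_upper a n k) = replicate n 1"
    by (auto simp: diag_mat_def coxeter_upper_def intro!: replicate_eqI)
  ultimately show ?thesis
    by (simp add: det_upper_triangular[of _ n])
qed

lemma poly_char_poly_reflection_product:
  fixes a :: "nat \<Rightarrow> nat \<Rightarrow> 'a::field"
  assumes "\<And>i. i < n \<Longrightarrow> a i i = 2"
  shows "poly (char_poly (reflection_product a n [0..<n])) x = det_fun n (coxeter_pencil a x)"
proof -
  let ?C = "reflection_product a n [0..<n]" and ?U = "coxeter_upper a n 0"
  have char_matrix: "- char_matrix ?C x = x \<cdot>\<^sub>m 1\<^sub>m n - ?C"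
    using carrier_matD[OF reflection_product_carrier[of a n "[0..<n]"]]
    by (intro eq_matI) (auto simp: char_matrix_def)
  have "?U * - char_matrix ?C x = ?U * (x \<cdot>\<^sub>m 1\<^sub>m n) - ?U * ?C"
    unfolding char_matrix by (rule mult_minus_distrib_mat[of _ n n _ n]) auto
  also have "?U * (x \<cdot>\<^sub>m 1\<^sub>m n) = x \<cdot>\<^sub>m ?U"
    by (rule trans[OF mult_smult_distrib[of _ n n _ n]])
      (auto simp: right_mult_one_mat[OF coxeter_mats_carrier(2)])
  also have "?U * ?C = coxeter_lower a n 0"
    using assms by (simp add: coxeter_upper_mult_reflections)
  also have "x \<cdot>\<^sub>m ?U - coxeter_lower a n 0 = mat n n (\<lambda>(i, j). coxeter_pencil a x i j)"
    by (intro eq_matI) (auto simp: coxeter_upper_def coxeter_lower_def coxeter_pencil_def)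
  finally have pencil: "?U * - char_matrix ?C x = mat n n (\<lambda>(i, j). coxeter_pencil a x i j)" .
  have "poly (char_poly ?C) x = det (- char_matrix ?C x)"
    by (rule char_poly_matrix[OF reflection_product_carrier])
  also have "\<dots> = det (?U * - char_matrix ?C x)"
    by (simp add: det_mult[of _ n] det_coxeter_upper)
  finally show ?thesis
    unfolding pencil det_fun_def .
qed

lemma map_mat_of_int_reflection_product:
  "map_mat of_int (reflection_product a n ks) =
    (reflection_product (\<lambda>i j. of_int (a i j)) n ks :: 'a::comm_ring_1 mat)"
proof (induction ks)
  case Nil
  show ?case by (simp add: of_int_hom.mat_hom_one)
next
  case (Cons k ks)
  have "map_mat of_int (reflection_mat a n k) =
      (reflection_mat (\<lambda>i j. of_int (a i j)) n k :: 'a mat)"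
    by (auto simp: reflection_mat_def)
  with Cons show ?case
    by (simp add: of_int_hom.mat_hom_mult[of _ n n _ n])
qed

definition cartan_pencil :: "root_type \<Rightarrow> 'a::comm_ring_1 \<Rightarrow> nat \<Rightarrow> nat \<Rightarrow> 'a" where
  "cartan_pencil X = coxeter_pencil (\<lambda>i j. of_int (cartan_entry X i j))"

lemma poly_char_poly_coxeter_transformation:
  "poly (char_poly (map_mat of_int (coxeter_transformation X) :: 'a::field mat)) x =
    det_fun (type_rank X) (cartan_pencil X x)"
proof -
  have "coxeter_transformation X =
      reflection_product (cartan_entry X) (type_rank X) [0..<type_rank X]"
    unfolding coxeter_transformation_def simple_reflection_def reflection_mat_def
      reflection_product_def ..
  moreover have "cartan_entry X i i = 2" for i
    by (cases X) auto
  ultimately show ?thesis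
    unfolding cartan_pencil_def
    by (simp add: map_mat_of_int_reflection_product poly_char_poly_reflection_product)
qed

lemma det_cartan_pencil_path_end:
  assumes "\<And>j. j < n \<Longrightarrow> cartan_entry X j (Suc n) = 0 \<and> cartan_entry X (Suc n) j = 0"
  shows "det_fun (Suc (Suc n)) (cartan_pencil X x) =
    (x + 1) * det_fun (Suc n) (cartan_pencil X x)
    - of_int (cartan_entry X n (Suc n) * cartan_entry X (Suc n) n) * x
      * det_fun n (cartan_pencil X x)"
  using assms by (subst det_fun_path_end) (auto simp: cartan_pencil_def coxeter_pencil_def)

lemma det_cartan_pencil_A: "det_fun n (cartan_pencil (TA l) x) = (\<Sum>k<Suc n. x ^ k)"
proof (induction n rule: induct_nat_012)
  case (ge2 n)
  then show ?case
    by (subst det_cartan_pencil_path_end) (auto simp: algebra_simps)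
qed (simp_all add: det_fun_1 cartan_pencil_def coxeter_pencil_def)

lemma mult_sum_power_lessThan:
  fixes x :: "'a::comm_ring_1"
  shows "x * (\<Sum>k<n. x ^ k) = (\<Sum>k<n. x ^ k) + x ^ n - 1"
  using one_diff_power_eq[of x n] by (simp add: algebra_simps)

lemma geometric_sum_identity_BC:
  fixes x :: "'a::comm_ring_1"
  shows "(x + 1) * (\<Sum>k<Suc (Suc m). x ^ k) - 2 * x * (\<Sum>k<Suc m. x ^ k) = 1 + x ^ Suc (Suc m)"
  using mult_sum_power_lessThan[of x "Suc m"]
  by (simp add: algebra_simps del: sum.lessThan_Suc) (simp add: algebra_simps)

lemma geometric_sum_identity_D:
  fixes x :: "'a::comm_ring_1"
  shows "(\<Sum>k<Suc (Suc (Suc m)). x ^ k) - x * (\<Sum>k<Suc m. x ^ k) = 1 + x ^ Suc (Suc m)"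
  by (simp only: sum.lessThan_Suc[of _ "Suc (Suc m)"] sum.lessThan_Suc[of _ "Suc m"]
      mult_sum_power_lessThan) (simp add: algebra_simps)

lemma det_cartan_pencil_BC:
  assumes "X = TB l \<or> X = TC l" "2 \<le> l"
  shows "det_fun l (cartan_pencil X x) = 1 + x ^ l"
proof -
  define m where "m = l - 2"
  have l: "l = Suc (Suc m)"
    using assms(2) by (simp add: m_def)
  have "det_fun l (cartan_pencil X x) =
      (x + 1) * det_fun (Suc m) (cartan_pencil X x) - 2 * x * det_fun m (cartan_pencil X x)"
    unfolding l using assms(1) by (subst det_cartan_pencil_path_end) (auto simp: l)
  also have "det_fun (Suc m) (cartan_pencil X x) = det_fun (Suc m) (cartan_pencil (TA 0) x)"
    using assms(1) by (intro det_fun_cong) (auto simp: cartan_pencil_def coxeter_pencil_def l)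
  also have "det_fun m (cartan_pencil X x) = det_fun m (cartan_pencil (TA 0) x)"
    using assms(1) by (intro det_fun_cong) (auto simp: cartan_pencil_def coxeter_pencil_def l)
  finally show ?thesis
    by (simp only: det_cartan_pencil_A geometric_sum_identity_BC l)
qed

lemma det_cartan_pencil_D:
  assumes "3 \<le> l"
  shows "det_fun l (cartan_pencil (TD l) x) = (x + 1) * (1 + x ^ (l - 1))"
proof -
  define m where "m = l - 3"
  have l: "l = Suc (Suc (Suc m))"
    using assms by (simp add: m_def)
  let ?f = "cartan_pencil (TD l) x"
  let ?g = "\<lambda>i j. ?f (insert_index m i) (insert_index m j)"
  have "det_fun l ?f = (x + 1) * det_fun (Suc (Suc m)) ?f - x * det_fun (Suc m) ?g"
    unfolding l
    by (subst det_fun_pendant[of m])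
      (auto simp: cartan_pencil_def coxeter_pencil_def l doubleton_eq_iff)
  also have "det_fun (Suc (Suc m)) ?f = det_fun (Suc (Suc m)) (cartan_pencil (TA 0) x)"
    by (intro det_fun_cong) (auto simp: cartan_pencil_def coxeter_pencil_def l doubleton_eq_iff)
  also have "det_fun (Suc m) ?g = (x + 1) * det_fun m ?g"
    by (subst det_fun_Suc_last_col_zero)
      (auto simp: cartan_pencil_def coxeter_pencil_def l doubleton_eq_iff)
  also have "det_fun m ?g = det_fun m (cartan_pencil (TA 0) x)"
    by (intro det_fun_cong) (auto simp: cartan_pencil_def coxeter_pencil_def l doubleton_eq_iff)
  finally show ?thesis
    using geometric_sum_identity_D[of x m]
    by (simp add: det_cartan_pencil_A l algebra_simps del: sum.lessThan_Suc)
qed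

lemma det_fun_numeral:
  "det_fun (numeral k) f = (\<Sum>i<numeral k. f i (pred_numeral k) *
     ((-1) ^ (i + pred_numeral k) * det_fun (pred_numeral k) (\<lambda>a b. f (insert_index i a) b)))"
  unfolding numeral_eq_Suc by (rule det_fun_laplace_last_col)

(* Here the last node is not a leaf hanging off its predecessor (node 2 hangs off node 0, node 3
   is the branch point), so these two determinants are expanded directly. *)
lemma det_cartan_pencil_E8_3_4:
  "det_fun 3 (cartan_pencil TE8 x) = x^3 + 2 * x^2 + 2 * x + 1"
  "det_fun 4 (cartan_pencil TE8 x) = x^4 + x^3 + x^2 + x + 1"
  by (simp_all add: det_fun_numeral det_fun_1 lessThan_nat_numeral insert_index_def
      cartan_pencil_def coxeter_pencil_def E_edge_def doubleton_eq_iff algebra_simps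
      power2_eq_square power3_eq_cube power4_eq_xxxx)

lemma det_cartan_pencil_E:
  "det_fun 6 (cartan_pencil TE8 x) = x^6 + x^5 - x^3 + x + 1"
  "det_fun 7 (cartan_pencil TE8 x) = x^7 + x^6 - x^4 - x^3 + x + 1"
  "det_fun 8 (cartan_pencil TE8 x) = x^8 + x^7 - x^5 - x^4 - x^3 + x + 1"
proof -
  let ?D = "\<lambda>n. det_fun n (cartan_pencil TE8 x)"
  have step: "?D (Suc (Suc n)) = (x + 1) * ?D (Suc n) - x * ?D n" if "3 \<le> n" "n \<le> 6" for n
    using that by (subst det_cartan_pencil_path_end) (auto simp: E_edge_def doubleton_eq_iff)
  have D5: "?D 5 = x^5 + x^4 + x + 1"
    unfolding step[of 3, simplified] det_cartan_pencil_E8_3_4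
    by (simp add: algebra_simps numeral_eq_Suc)
  show D6: "?D 6 = x^6 + x^5 - x^3 + x + 1"
    unfolding step[of 4, simplified] D5 det_cartan_pencil_E8_3_4
    by (simp add: algebra_simps numeral_eq_Suc)
  show D7: "?D 7 = x^7 + x^6 - x^4 - x^3 + x + 1"
    unfolding step[of 5, simplified] D6 D5 by (simp add: algebra_simps numeral_eq_Suc)
  show "?D 8 = x^8 + x^7 - x^5 - x^4 - x^3 + x + 1"
    unfolding step[of 6, simplified] D7 D6 by (simp add: algebra_simps numeral_eq_Suc)
qed

lemma cartan_pencil_E6_E7:
  "cartan_pencil TE6 = cartan_pencil TE8" "cartan_pencil TE7 = cartan_pencil TE8"
  by (simp_all add: cartan_pencil_def fun_eq_iff)

lemma det_cartan_pencil_F4: "det_fun 4 (cartan_pencil TF4 x) = x^4 - x^2 + 1"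
proof -
  let ?D = "\<lambda>n. det_fun n (cartan_pencil TF4 x)"
  have "?D 2 = (x + 1) * ?D 1 - x" "?D 3 = (x + 1) * ?D 2 - 2 * x * ?D 1"
    "?D 4 = (x + 1) * ?D 3 - x * ?D 2"
    using det_cartan_pencil_path_end[of 0 TF4 x] det_cartan_pencil_path_end[of 1 TF4 x]
      det_cartan_pencil_path_end[of 2 TF4 x]
    by (simp_all add: numeral_eq_Suc)
  then show ?thesis
    by (simp add: det_fun_1 cartan_pencil_def coxeter_pencil_def algebra_simps numeral_eq_Suc)
qed

lemma det_cartan_pencil_G2: "det_fun 2 (cartan_pencil TG2 x) = x^2 - x + 1"
  using det_cartan_pencil_path_end[of 0 TG2 x]
  by (simp add: det_fun_1 cartan_pencil_def coxeter_pencil_def algebra_simps numeral_eq_Suc)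

lemma coxeter_identity_A:
  fixes t :: "'a::comm_ring_1"
  shows "det_fun l (cartan_pencil (TA l) (t^2)) *
      ((1 - t^2) * (1 - t^2) * (1 - t^(l + 1)) * (1 - t^(l + 1))) =
    (1 - t^(2 * (l + 1))) * (1 - t^(l + 1)) * (1 - t^(l + 1)) * (1 - t^2)"
proof -
  let ?D = "det_fun l (cartan_pencil (TA l) (t^2))" and ?c = "1 - t^(l + 1)"
  have "?D * ((1 - t^2) * (1 - t^2) * ?c * ?c) = ((1 - t^2) * ?D) * ?c * ?c * (1 - t^2)"
    by (simp only: ac_simps)
  also have "(1 - t^2) * ?D = 1 - t^(2 * (l + 1))"
    unfolding det_cartan_pencil_A one_diff_power_eq[symmetric] by (metis Suc_eq_plus1 power_mult)
  finally show ?thesis .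
qed

lemma coxeter_identity_B:
  fixes t :: "'a::comm_ring_1"
  assumes "2 \<le> l"
  shows "det_fun l (cartan_pencil (TB l) (t^2)) *
      ((1 - t^2) * (1 - t^4) * (1 - t^(2*l - 2)) * (1 - t^(2*l))) =
    (1 - t^(2 * (2*l))) * (1 - t^(2 * (l - 1))) * (1 - t^4) * (1 - t^2)"
proof -
  have "t^(2 * (2*l)) = (t^(2*l))^2" "(t^2)^l = t^(2*l)" "t^4 = (t^2)^2" "2 * (l - 1) = 2*l - 2"
    by (simp_all flip: power_mult add: mult_ac right_diff_distrib')
  then show ?thesis
    using det_cartan_pencil_BC[of "TB l" l "t^2"] assms
    by (simp add: algebra_simps power2_eq_square)
qed

lemma coxeter_identity_C:
  fixes t :: "'a::comm_ring_1"
  assumes "2 \<le> l"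
  shows "det_fun l (cartan_pencil (TC l) (t^2)) *
      ((1 - t^2) * (1 - t^2) * (1 - t^(2*l)) * (1 - t^(2*l))) =
    (1 - t^(2 * (2*l))) * (1 - t^(2*l)) * (1 - t^2) * (1 - t^2)"
proof -
  have "t^(2 * (2*l)) = (t^(2*l))^2" "(t^2)^l = t^(2*l)"
    by (simp_all flip: power_mult add: mult_ac)
  then show ?thesis
    using det_cartan_pencil_BC[of "TC l" l "t^2"] assms
    by (simp add: algebra_simps power2_eq_square)
qed

lemma coxeter_identity_D:
  fixes t :: "'a::comm_ring_1"
  assumes "3 \<le> l"
  shows "det_fun l (cartan_pencil (TD l) (t^2)) *
      ((1 - t^2) * (1 - t^4) * (1 - t^(2*l - 4)) * (1 - t^(2*l - 2))) =
    (1 - t^(2 * (2*l - 2))) * (1 - t^(2 * (l - 2))) * (1 - t^4) * (1 - t^4)"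
proof -
  have "t^(2 * (2*l - 2)) = (t^(2*l - 2))^2" "(t^2)^(l - 1) = t^(2*l - 2)" "t^4 = (t^2)^2"
    "2 * (l - 2) = 2*l - 4"
    by (simp_all flip: power_mult add: mult_ac right_diff_distrib')
  then show ?thesis
    using det_cartan_pencil_D[OF assms, of "t^2"] by (simp add: algebra_simps power2_eq_square)
qed

lemma coxeter_identities_exceptional:
  fixes t :: "'a::comm_ring_1"
  shows "det_fun 6 (cartan_pencil TE6 (t^2)) * ((1 - t^2) * (1 - t^6) * (1 - t^8) * (1 - t^12)) =
      (1 - t^(2 * 12)) * (1 - t^6) * (1 - t^6) * (1 - t^4)"
    and "det_fun 7 (cartan_pencil TE7 (t^2)) * ((1 - t^2) * (1 - t^8) * (1 - t^12) * (1 - t^18)) =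
      (1 - t^(2 * 18)) * (1 - t^8) * (1 - t^6) * (1 - t^4)"
    and "det_fun 8 (cartan_pencil TE8 (t^2)) * ((1 - t^2) * (1 - t^12) * (1 - t^20) * (1 - t^30)) =
      (1 - t^(2 * 30)) * (1 - t^10) * (1 - t^6) * (1 - t^4)"
    and "det_fun 4 (cartan_pencil TF4 (t^2)) * ((1 - t^2) * (1 - t^6) * (1 - t^8) * (1 - t^12)) =
      (1 - t^(2 * 12)) * (1 - t^6) * (1 - t^4) * (1 - t^2)"
    and "det_fun 2 (cartan_pencil TG2 (t^2)) * ((1 - t^2) * (1 - t^4) * (1 - t^4) * (1 - t^6)) =
      (1 - t^(2 * 6)) * (1 - t^4) * (1 - t^2) * (1 - t^2)"
  unfolding cartan_pencil_E6_E7 det_cartan_pencil_E det_cartan_pencil_F4 det_cartan_pencil_G2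
  by (simp_all add: algebra_simps numeral_eq_Suc)

lemma coxeter_table_identity:
  fixes t :: "'a::comm_ring_1"
  assumes "admissible_type X" and "table_data X = (a, b, h, p2, q2, r2)"
  shows "det_fun (type_rank X) (cartan_pencil X (t^2)) *
      ((1 - t^2) * (1 - t^a) * (1 - t^b) * (1 - t^h)) =
    (1 - t^(2*h)) * (1 - t^p2) * (1 - t^q2) * (1 - t^r2)"
  using assms coxeter_identity_A[of _ t]
  by (cases X) (auto simp: coxeter_identity_B coxeter_identity_C coxeter_identity_D
      coxeter_identities_exceptional)

lemma prod_exponents_eq_poly_char_poly:
  assumes "is_exponent_list X h ms"
  shows "(\<Prod>m\<leftarrow>ms. y - cis (2 * pi / real h) ^ m) =
    poly (char_poly (map_mat of_int (coxeter_transformation X) :: complex mat)) y"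
proof -
  have "y - cis (2 * pi / real h) ^ m = poly [: - cis (2 * pi * real m / real h), 1 :] y" for m
    by (simp add: DeMoivre mult.commute)
  with assms show ?thesis
    by (simp add: is_exponent_list_def poly_prod_list o_def)
qed

theorem mainTheorem6:
  fixes X :: root_type and a b h p2 q2 r2 :: nat and ms :: "nat list" and t :: complex
  assumes "admissible_type X"
    and "table_data X = (a, b, h, p2, q2, r2)"
    and "is_exponent_list X h ms"
    and "(1 - t^2) * (1 - t^a) * (1 - t^b) * (1 - t^h) \<noteq> 0"
  shows "(\<Prod>m\<leftarrow>ms. t^2 - cis (2 * pi / real h) ^ m) =
         ((1 - t^(2*h)) * (1 - t^p2) * (1 - t^q2) * (1 - t^r2)) /
         ((1 - t^2) * (1 - t^a) * (1 - t^b) * (1 - t^h))"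
proof -
  have "(\<Prod>m\<leftarrow>ms. t^2 - cis (2 * pi / real h) ^ m) = det_fun (type_rank X) (cartan_pencil X (t^2))"
    using assms(3)
    by (simp add: prod_exponents_eq_poly_char_poly poly_char_poly_coxeter_transformation)
  also have "\<dots> = ((1 - t^(2*h)) * (1 - t^p2) * (1 - t^q2) * (1 - t^r2)) /
      ((1 - t^2) * (1 - t^a) * (1 - t^b) * (1 - t^h))"
    using coxeter_table_identity[OF assms(1,2), of t] assms(4) by (simp add: eq_divide_eq)
  finally show ?thesis .
qed

end
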